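(* Let $k$ be a number field with ring of integers $\mathcal{O}_k$, $\mathcal{A}$ a quaternion algebra over $k$, $\mathcal{O}\subset\mathcal{A}$ an order, and $I\subset\mathcal{O}_k$ an ideal. For any $\gamma\in\mathcal{O}^1(I)$ we have $\mathrm{tr}(\gamma)\equiv 2 \pmod{I^2}$.
   Context: $\mathrm{tr}$ denotes the reduced trace of $\mathcal{A}$, $\mathcal{O}^1$ the group of elements of $\mathcal{O}$ of reduced norm one, $I\mathcal{O}=\{\sum_j t_jw_j: t_j\in I,\ w_j\in\mathcal{O}\}$, and $\mathcal{O}^1(I)=\{\gamma\in\mathcal{O}^1:\gamma-1\in I\mathcal{O}\}$. *)

theory Defs
  imports "HOL-Computational_Algebra.Polynomial"
begin

definition number_field :: "'k::field_char_0 itself \<Rightarrow> bool" where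
  "number_field _ \<longleftrightarrow> (\<exists>B :: 'k set. finite B \<and>
      (\<forall>x::'k. \<exists>c. x = (\<Sum>b\<in>B. of_rat (c b) * b)))"

definition ring_of_integers :: "('k::field_char_0) set" where
  "ring_of_integers = {x. algebraic_int x}"

definition ok_ideal :: "('k::field_char_0) set \<Rightarrow> bool" where
  "ok_ideal I \<longleftrightarrow> I \<subseteq> ring_of_integers \<and> 0 \<in> I \<and>
     (\<forall>x\<in>I. \<forall>y\<in>I. x + y \<in> I) \<and>
     (\<forall>r\<in>ring_of_integers. \<forall>x\<in>I. r * x \<in> I)"

definition ideal_prod :: "('k::comm_ring_1) set \<Rightarrow> 'k set \<Rightarrow> 'k set" where
  "ideal_prod I J = {\<Sum>i<n. t i * s i | (n::nat) t s. \<forall>i<n. t i \<in> I \<and> s i \<in> J}"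

(* Quaternion algebra (a,b)_k with basis 1, i, j, ij; i^2 = a, j^2 = b, ij = -ji *)
datatype 'k quat = Quat 'k 'k 'k 'k

fun qadd :: "('k::field) quat \<Rightarrow> 'k quat \<Rightarrow> 'k quat" where
  "qadd (Quat x0 x1 x2 x3) (Quat y0 y1 y2 y3) = Quat (x0+y0) (x1+y1) (x2+y2) (x3+y3)"

fun qneg :: "('k::field) quat \<Rightarrow> 'k quat" where
  "qneg (Quat x0 x1 x2 x3) = Quat (-x0) (-x1) (-x2) (-x3)"

fun qscale :: "'k::field \<Rightarrow> 'k quat \<Rightarrow> 'k quat" where
  "qscale c (Quat x0 x1 x2 x3) = Quat (c*x0) (c*x1) (c*x2) (c*x3)"

definition qzero :: "('k::field) quat" where "qzero = Quat 0 0 0 0"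
definition qone :: "('k::field) quat" where "qone = Quat 1 0 0 0"

fun qmul :: "'k::field \<Rightarrow> 'k \<Rightarrow> 'k quat \<Rightarrow> 'k quat \<Rightarrow> 'k quat" where
  "qmul a b (Quat x0 x1 x2 x3) (Quat y0 y1 y2 y3) =
     Quat (x0*y0 + a*x1*y1 + b*x2*y2 - a*b*x3*y3)
          (x0*y1 + x1*y0 - b*x2*y3 + b*x3*y2)
          (x0*y2 + x2*y0 + a*x1*y3 - a*x3*y1)
          (x0*y3 + x3*y0 + x1*y2 - x2*y1)"

definition qsum :: "('i \<Rightarrow> ('k::field) quat) \<Rightarrow> 'i set \<Rightarrow> 'k quat" where
  "qsum f S = Finite_Set.fold (\<lambda>i acc. qadd (f i) acc) qzero S"

fun qtr :: "('k::field) quat \<Rightarrow> 'k" where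
  "qtr (Quat x0 x1 x2 x3) = 2 * x0"

fun qnrm :: "'k::field \<Rightarrow> 'k \<Rightarrow> 'k quat \<Rightarrow> 'k" where
  "qnrm a b (Quat x0 x1 x2 x3) = x0^2 - a*x1^2 - b*x2^2 + a*b*x3^2"

definition is_order :: "'k::field_char_0 \<Rightarrow> 'k \<Rightarrow> 'k quat set \<Rightarrow> bool" where
  "is_order a b \<O> \<longleftrightarrow>
     qone \<in> \<O> \<and> qzero \<in> \<O> \<and>
     (\<forall>x\<in>\<O>. \<forall>y\<in>\<O>. qadd x y \<in> \<O> \<and> qmul a b x y \<in> \<O>) \<and>
     (\<forall>x\<in>\<O>. qneg x \<in> \<O>) \<and>
     (\<forall>r\<in>ring_of_integers. \<forall>x\<in>\<O>. qscale r x \<in> \<O>) \<and>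
     (\<exists>G. finite G \<and> G \<subseteq> \<O> \<and>
        \<O> = {qsum (\<lambda>g. qscale (c g) g) G | c. \<forall>g\<in>G. c g \<in> ring_of_integers}) \<and>
     (\<forall>x::'k quat. \<exists>G c. finite G \<and> G \<subseteq> \<O> \<and> x = qsum (\<lambda>g. qscale (c g) g) G)"

definition ideal_times_order :: "('k::field) set \<Rightarrow> 'k quat set \<Rightarrow> 'k quat set" where
  "ideal_times_order I \<O> =
     {qsum (\<lambda>j. qscale (t j) (w j)) {..<n} | (n::nat) t w. \<forall>j<n. t j \<in> I \<and> w j \<in> \<O>}"

definition order_norm_one_level :: "'k::field \<Rightarrow> 'k \<Rightarrow> 'k quat set \<Rightarrow> 'k set \<Rightarrow> 'k quat set" where
  "order_norm_one_level a b \<O> I =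
     {\<gamma>\<in>\<O>. qnrm a b \<gamma> = 1 \<and> qadd \<gamma> (qneg qone) \<in> ideal_times_order I \<O>}"

end

theory Submission
  imports Defs "Jordan_Normal_Form.Char_Poly"
begin

(*
  For \<gamma> of norm 1 we have tr \<gamma> - 2 = -nrm (\<gamma> - 1). Writing \<gamma> - 1 = \<Sum>j t_j w_j with t_j \<in> I and
  w_j \<in> \<O>, the quadratic form nrm expands to
    \<Sum>j t_j^2 nrm w_j + \<Sum>(i<j) t_i t_j (nrm (w_i + w_j) - nrm w_i - nrm w_j),
  which lies in I^2 as soon as norms of elements of \<O> are algebraic integers.

  For the latter, let \<O> be spanned over O_k by a finite set G and let T be the finite set of
  O_k-coordinates of 1 and of the products w g (g \<in> G). Writing x* for the conjugate, the
  identity (w g)* (w h) = nrm w \<cdot> g* h shows that multiplication by nrm w preserves the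
  smallest set that contains the products g* h and is closed under addition and under
  scaling by elements of T; this set contains 1. Since T consists of algebraic integers,
  this set lies in the Z-span of a finite subset of itself, so nrm w is an eigenvalue of an
  integer matrix.
*)

section \<open>Quaternion arithmetic\<close>

fun q0 :: "'k quat \<Rightarrow> 'k" where "q0 (Quat x0 x1 x2 x3) = x0"
fun q1 :: "'k quat \<Rightarrow> 'k" where "q1 (Quat x0 x1 x2 x3) = x1"
fun q2 :: "'k quat \<Rightarrow> 'k" where "q2 (Quat x0 x1 x2 x3) = x2"
fun q3 :: "'k quat \<Rightarrow> 'k" where "q3 (Quat x0 x1 x2 x3) = x3"

lemma quat_eqI:
  "q0 x = q0 y \<Longrightarrow> q1 x = q1 y \<Longrightarrow> q2 x = q2 y \<Longrightarrow> q3 x = q3 y \<Longrightarrow> x = y"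
  by (cases x; cases y) auto

(* Only the additive structure is a type class instance: the product depends on the parameters a, b. *)
instantiation quat :: (field) ab_group_add
begin

definition zero_quat_def: "0 = qzero"
definition plus_quat_def: "x + y = qadd x y"
definition uminus_quat_def: "- x = qneg x"
definition minus_quat_def: "(x::'a quat) - y = qadd x (qneg y)"

instance
proof
  fix x y z :: "'a quat"
  show "x + y + z = x + (y + z)" unfolding plus_quat_def
    by (cases x; cases y; cases z) (simp add: algebra_simps)
  show "x + y = y + x" unfolding plus_quat_def
    by (cases x; cases y) (simp add: algebra_simps)
  show "0 + x = x" unfolding plus_quat_def zero_quat_def qzero_def
    by (cases x) simp
  show "- x + x = 0" unfolding plus_quat_def zero_quat_def qzero_def uminus_quat_def
    by (cases x) simp
  show "x - y = x + - y" unfolding plus_quat_def minus_quat_def uminus_quat_def by simp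
qed

end

lemma quat_components [simp]:
  fixes x y :: "'k::field quat"
  shows "q0 (x + y) = q0 x + q0 y" "q1 (x + y) = q1 x + q1 y"
    "q2 (x + y) = q2 x + q2 y" "q3 (x + y) = q3 x + q3 y"
    "q0 (- x) = - q0 x" "q1 (- x) = - q1 x" "q2 (- x) = - q2 x" "q3 (- x) = - q3 x"
    "q0 0 = 0" "q1 0 = 0" "q2 0 = 0" "q3 0 = 0"
    "q0 (qscale c x) = c * q0 x" "q1 (qscale c x) = c * q1 x"
    "q2 (qscale c x) = c * q2 x" "q3 (qscale c x) = c * q3 x"
  by (cases x; cases y; simp add: plus_quat_def uminus_quat_def zero_quat_def qzero_def)+

lemma quat_components_sum [simp]:
  fixes f :: "'i \<Rightarrow> 'k::field quat"
  shows "q0 (sum f S) = (\<Sum>s\<in>S. q0 (f s))" "q1 (sum f S) = (\<Sum>s\<in>S. q1 (f s))"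
    "q2 (sum f S) = (\<Sum>s\<in>S. q2 (f s))" "q3 (sum f S) = (\<Sum>s\<in>S. q3 (f s))"
  by (induction S rule: infinite_finite_induct; simp)+

lemma qmul_components [simp]:
  "q0 (qmul a b x y) = q0 x * q0 y + a * q1 x * q1 y + b * q2 x * q2 y - a * b * q3 x * q3 y"
  "q1 (qmul a b x y) = q0 x * q1 y + q1 x * q0 y - b * q2 x * q3 y + b * q3 x * q2 y"
  "q2 (qmul a b x y) = q0 x * q2 y + q2 x * q0 y + a * q1 x * q3 y - a * q3 x * q1 y"
  "q3 (qmul a b x y) = q0 x * q3 y + q3 x * q0 y + q1 x * q2 y - q2 x * q1 y"
  by (cases x; cases y; simp)+

lemma qnrm_components:
  "qnrm a b x = q0 x ^ 2 - a * q1 x ^ 2 - b * q2 x ^ 2 + a * b * q3 x ^ 2"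
  by (cases x) simp

lemma qsum_eq_sum:
  assumes "finite S"
  shows "qsum f S = sum f S"
proof -
  interpret comp_fun_commute "\<lambda>i acc. qadd (f i) acc"
    by unfold_locales (auto simp: plus_quat_def[symmetric] add.left_commute)
  from assms show ?thesis unfolding qsum_def
    by (induction S rule: finite_induct) (auto simp: plus_quat_def zero_quat_def)
qed

lemma qscale_qscale: "qscale c (qscale d x) = qscale (c * d) x"
  by (rule quat_eqI) (simp_all add: algebra_simps)

lemma qscale_one: "qscale 1 x = x"
  by (rule quat_eqI) simp_all

lemma qscale_zero_left: "qscale 0 x = 0"
  by (rule quat_eqI) simp_all

lemma qscale_zero_right: "qscale c 0 = 0"
  by (rule quat_eqI) simp_all

lemma qscale_add_right: "qscale c (x + y) = qscale c x + qscale c y"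
  by (rule quat_eqI) (simp_all add: algebra_simps)

lemma qscale_add_left: "qscale (c + d) x = qscale c x + qscale d x"
  by (rule quat_eqI) (simp_all add: algebra_simps)

lemma qscale_sum: "qscale c (sum f S) = (\<Sum>s\<in>S. qscale c (f s))"
  by (rule quat_eqI) (simp_all add: sum_distrib_left)

lemma qmul_sum_left: "qmul a b (sum f S) y = (\<Sum>s\<in>S. qmul a b (f s) y)"
  by (rule quat_eqI) (simp_all add: sum_distrib_left sum_distrib_right sum_subtractf sum.distrib algebra_simps)

lemma qmul_sum_right: "qmul a b x (sum f S) = (\<Sum>s\<in>S. qmul a b x (f s))"
  by (rule quat_eqI) (simp_all add: sum_distrib_left sum_distrib_right sum_subtractf sum.distrib algebra_simps)

lemma qmul_qscale_left: "qmul a b (qscale c x) y = qscale c (qmul a b x y)"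
  by (rule quat_eqI) (simp_all add: algebra_simps)

lemma qmul_qscale_right: "qmul a b x (qscale c y) = qscale c (qmul a b x y)"
  by (rule quat_eqI) (simp_all add: algebra_simps)

fun qconj :: "'k::field quat \<Rightarrow> 'k quat" where
  "qconj (Quat x0 x1 x2 x3) = Quat x0 (-x1) (-x2) (-x3)"

lemma qconj_components [simp]:
  "q0 (qconj x) = q0 x" "q1 (qconj x) = - q1 x" "q2 (qconj x) = - q2 x" "q3 (qconj x) = - q3 x"
  by (cases x; simp)+

lemma qconj_sum: "qconj (sum f S) = (\<Sum>s\<in>S. qconj (f s))"
  by (rule quat_eqI) (simp_all add: sum_negf)

lemma qconj_qscale: "qconj (qscale c x) = qscale c (qconj x)"
  by (rule quat_eqI) simp_all

lemma qmul_qconj_qmul_qmul: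
  "qmul a b (qconj (qmul a b w x)) (qmul a b w y) = qscale (qnrm a b w) (qmul a b (qconj x) y)"
  by (rule quat_eqI) (simp_all add: qnrm_components power2_eq_square algebra_simps)

lemma qmul_qconj_sum_sum:
  "qmul a b (qconj (\<Sum>x\<in>X. qscale (\<alpha> x) x)) (\<Sum>y\<in>Y. qscale (\<beta> y) y)
   = (\<Sum>x\<in>X. \<Sum>y\<in>Y. qscale (\<alpha> x) (qscale (\<beta> y) (qmul a b (qconj x) y)))"
  by (simp add: qconj_sum qconj_qscale qmul_sum_left qmul_sum_right qmul_qscale_left
      qmul_qscale_right qscale_sum qscale_qscale mult.commute sum.swap[of _ Y])

section \<open>Algebraic integers as eigenvalues of integer matrices\<close>

lemma algebraic_int_eigenvalue_int_mat:
  fixes x :: "'k::field_char_0"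
  assumes A: "A \<in> carrier_mat n n" and "u \<in> carrier_vec n" "u \<noteq> 0\<^sub>v n"
    and "map_mat of_int A *\<^sub>v u = x \<cdot>\<^sub>v u"
  shows "algebraic_int x"
proof -
  let ?A = "map_mat (of_int :: int \<Rightarrow> 'k) A"
  have "eigenvalue ?A x"
    unfolding eigenvalue_def eigenvector_def using assms by auto
  then have "poly (char_poly ?A) x = 0"
    using eigenvalue_root_char_poly[of ?A n] A by auto
  moreover have "char_poly ?A = map_poly of_int (char_poly A)"
    by (rule of_int_hom.char_poly_hom[OF A])
  moreover have "lead_coeff (char_poly A) = 1"
    using degree_monic_char_poly[OF A] by simp
  ultimately show ?thesis
    unfolding algebraic_int_altdef_ipoly by auto
qed

lemma algebraic_int_eigenvalue_int_family:
  fixes x :: "'k::field_char_0" and v :: "'a \<Rightarrow> 'k" and M :: "'a \<Rightarrow> 'a \<Rightarrow> int"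
  assumes S: "finite S" and "s0 \<in> S" "v s0 \<noteq> 0"
    and eigen: "\<And>s. s \<in> S \<Longrightarrow> x * v s = (\<Sum>s'\<in>S. of_int (M s s') * v s')"
  shows "algebraic_int x"
proof -
  define n where "n = card S"
  obtain h where h: "bij_betw h {..<n} S"
    using ex_bij_betw_nat_finite[OF S] unfolding n_def atLeast0LessThan by blast
  define A where "A = mat n n (\<lambda>(i, j). M (h i) (h j))"
  define u where "u = vec n (\<lambda>i. v (h i))"
  have A: "A \<in> carrier_mat n n" and u: "u \<in> carrier_vec n"
    unfolding A_def u_def by simp_all
  obtain i0 where "i0 < n" "h i0 = s0"
    using h \<open>s0 \<in> S\<close> unfolding bij_betw_def by force
  then have "u \<noteq> 0\<^sub>v n"
    using \<open>v s0 \<noteq> 0\<close> unfolding u_def by (metis index_vec index_zero_vec(1))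
  moreover have "map_mat of_int A *\<^sub>v u = x \<cdot>\<^sub>v u"
  proof (rule eq_vecI)
    fix i assume "i < dim_vec (x \<cdot>\<^sub>v u)"
    then have i: "i < n" using u by simp
    then have "h i \<in> S" using h unfolding bij_betw_def by auto
    have "(map_mat of_int A *\<^sub>v u) $ i = (\<Sum>j<n. of_int (M (h i) (h j)) * v (h j))"
      using i A u unfolding A_def u_def
      by (simp add: mult_mat_vec_def scalar_prod_def atLeast0LessThan)
    also have "\<dots> = (\<Sum>s'\<in>S. of_int (M (h i) s') * v s')"
      by (rule sum.reindex_bij_betw[OF h])
    also have "\<dots> = (x \<cdot>\<^sub>v u) $ i"
      using i eigen[OF \<open>h i \<in> S\<close>] unfolding u_def by simp
    finally show "(map_mat of_int A *\<^sub>v u) $ i = (x \<cdot>\<^sub>v u) $ i" .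
  qed (use u A in simp)
  ultimately show ?thesis
    using algebraic_int_eigenvalue_int_mat[OF A u] by blast
qed

lemma algebraic_int_monic_relation:
  fixes c :: "'k::field_char_0"
  assumes "algebraic_int c"
  obtains d :: nat and m :: "nat \<Rightarrow> int" where "d > 0" "c ^ d = (\<Sum>i<d. of_int (m i) * c ^ i)"
proof -
  obtain p where p: "poly (map_poly of_int p) c = 0" "lead_coeff p = 1"
    using assms unfolding algebraic_int_altdef_ipoly by blast
  define d where "d = degree p"
  have "poly (map_poly (of_int :: int \<Rightarrow> 'k) p) c = (\<Sum>i\<le>d. of_int (coeff p i) * c ^ i)"
    unfolding poly_altdef d_def by (simp add: coeff_map_poly degree_map_poly)
  also have "\<dots> = (\<Sum>i<d. of_int (coeff p i) * c ^ i) + c ^ d"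
    using p(2) unfolding d_def by (simp add: lessThan_Suc_atMost[symmetric])
  finally have power_d: "c ^ d = (\<Sum>i<d. of_int (- coeff p i) * c ^ i)"
    using p(1) by (simp add: sum_negf eq_neg_iff_add_eq_0 add.commute)
  have "d > 0"
  proof (rule ccontr)
    assume "\<not> d > 0"
    with power_d show False by simp
  qed
  from \<open>d > 0\<close> power_d show ?thesis
    by (rule that[of d "\<lambda>i. - coeff p i"])
qed

section \<open>Integer spans of quaternions\<close>

definition int_span :: "'k::field quat set \<Rightarrow> 'k quat set" where
  "int_span S = {\<Sum>s\<in>S. qscale (of_int (m s)) s | m. True}"

lemma int_spanI: "x = (\<Sum>s\<in>S. qscale (of_int (m s)) s) \<Longrightarrow> x \<in> int_span S"
  unfolding int_span_def by blast

lemma int_spanE: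
  assumes "x \<in> int_span S"
  obtains m where "x = (\<Sum>s\<in>S. qscale (of_int (m s)) s)"
  using assms unfolding int_span_def by blast

lemma int_span_base:
  assumes "finite S" "s \<in> S"
  shows "s \<in> int_span S"
proof (rule int_spanI)
  have "(\<Sum>t\<in>S. qscale (of_int (if t = s then 1 else 0)) t) = (\<Sum>t\<in>S. if t = s then t else 0)"
    by (rule sum.cong) (simp_all add: qscale_one qscale_zero_left)
  also have "\<dots> = s" using assms by simp
  finally show "s = (\<Sum>t\<in>S. qscale (of_int (if t = s then 1 else 0)) t)" ..
qed

lemma int_span_zero: "0 \<in> int_span S"
  by (rule int_spanI[where m = "\<lambda>_. 0"]) (simp add: qscale_zero_left)

lemma int_span_add:
  assumes "x \<in> int_span S" "y \<in> int_span S"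
  shows "x + y \<in> int_span S"
proof -
  obtain m where "x = (\<Sum>s\<in>S. qscale (of_int (m s)) s)"
    using assms(1) by (rule int_spanE)
  moreover obtain m' where "y = (\<Sum>s\<in>S. qscale (of_int (m' s)) s)"
    using assms(2) by (rule int_spanE)
  ultimately have "x + y = (\<Sum>s\<in>S. qscale (of_int (m s + m' s)) s)"
    by (simp add: sum.distrib[symmetric] qscale_add_left)
  then show ?thesis by (rule int_spanI)
qed

lemma int_span_sum: "(\<And>i. i \<in> A \<Longrightarrow> f i \<in> int_span S) \<Longrightarrow> sum f A \<in> int_span S"
  by (induction A rule: infinite_finite_induct) (simp_all add: int_span_zero int_span_add)

lemma int_span_of_int_scale:
  assumes "x \<in> int_span S"
  shows "qscale (of_int k) x \<in> int_span S"
proof -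
  obtain m where "x = (\<Sum>s\<in>S. qscale (of_int (m s)) s)"
    using assms by (rule int_spanE)
  then have "qscale (of_int k) x = (\<Sum>s\<in>S. qscale (of_int (k * m s)) s)"
    by (simp add: qscale_sum qscale_qscale)
  then show ?thesis by (rule int_spanI)
qed

lemma int_span_qscale:
  assumes "x \<in> int_span S" "\<And>s. s \<in> S \<Longrightarrow> qscale c s \<in> int_span S'"
  shows "qscale c x \<in> int_span S'"
proof -
  obtain m where "x = (\<Sum>s\<in>S. qscale (of_int (m s)) s)"
    using assms(1) by (rule int_spanE)
  then have "qscale c x = (\<Sum>s\<in>S. qscale (of_int (m s)) (qscale c s))"
    by (simp add: qscale_sum qscale_qscale mult.commute)
  also have "\<dots> \<in> int_span S'"
    using assms(2) by (intro int_span_sum int_span_of_int_scale)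
  finally show ?thesis .
qed

lemma algebraic_int_if_int_span_stable:
  fixes x :: "'k::field_char_0"
  assumes "finite S" "z \<in> int_span S" "z \<noteq> 0"
    and stable: "\<And>s. s \<in> S \<Longrightarrow> qscale x s \<in> int_span S"
  shows "algebraic_int x"
proof -
  obtain s0 where "s0 \<in> S" "s0 \<noteq> 0"
  proof (rule ccontr)
    assume "\<not> thesis"
    then have "\<forall>s\<in>S. s = 0" using that by blast
    then have "z = 0" using assms(2)
      by (auto elim!: int_spanE intro!: sum.neutral simp: qscale_zero_right)
    with \<open>z \<noteq> 0\<close> show False ..
  qed
  have "\<forall>s\<in>S. \<exists>m. qscale x s = (\<Sum>s'\<in>S. qscale (of_int (m s')) s')"
    using stable unfolding int_span_def by blast
  then obtain M where M: "\<And>s. s \<in> S \<Longrightarrow> qscale x s = (\<Sum>s'\<in>S. qscale (of_int (M s s')) s')"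
    by metis
  obtain f where f: "f \<in> {q0, q1, q2, q3}" "f s0 \<noteq> 0"
    using \<open>s0 \<noteq> 0\<close> quat_eqI[of s0 0] by auto
  have "x * f s = (\<Sum>s'\<in>S. of_int (M s s') * f s')" if "s \<in> S" for s
    using f(1) arg_cong[OF M[OF that], of f] by auto
  then show ?thesis
    by (rule algebraic_int_eigenvalue_int_family[where v = f, OF assms(1) \<open>s0 \<in> S\<close> f(2)])
qed

lemma int_span_adjoin_algebraic_int:
  fixes c :: "'k::field_char_0"
  assumes "finite S" "algebraic_int c"
  obtains S' where "finite S'" "S \<subseteq> S'" "\<forall>s'\<in>S'. \<exists>i. \<exists>s\<in>S. s' = qscale (c ^ i) s"
    "\<forall>s\<in>S'. qscale c s \<in> int_span S'"
    "\<forall>y. (\<forall>s\<in>S. qscale y s \<in> int_span S) \<longrightarrow> (\<forall>s\<in>S'. qscale y s \<in> int_span S')"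
proof -
  obtain d m where "d > 0" and power_d: "c ^ d = (\<Sum>i<d. of_int (m i) * c ^ i)"
    using assms(2) by (rule algebraic_int_monic_relation)
  define S' where "S' = (\<lambda>(i, s). qscale (c ^ i) s) ` ({..<d} \<times> S)"
  have "finite S'" unfolding S'_def using assms(1) by simp
  have mem: "qscale (c ^ i) s \<in> S'" if "i < d" "s \<in> S" for i s
    unfolding S'_def using that by force
  then have span: "qscale (c ^ i) s \<in> int_span S'" if "i < d" "s \<in> S" for i s
    using that int_span_base[OF \<open>finite S'\<close>] by blast
  have "S \<subseteq> S'" using mem[of 0] \<open>d > 0\<close> by (auto simp: qscale_one)
  have "qscale c s' \<in> int_span S'" if "s' \<in> S'" for s'
  proof -
    obtain i s where "i < d" "s \<in> S" and s': "s' = qscale (c ^ i) s"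
      using \<open>s' \<in> S'\<close> unfolding S'_def by auto
    then have c_s': "qscale c s' = qscale (c ^ Suc i) s" by (simp add: qscale_qscale)
    show ?thesis
    proof (cases "Suc i < d")
      case True
      then show ?thesis unfolding c_s' using span \<open>s \<in> S\<close> by blast
    next
      case False
      with \<open>i < d\<close> have "Suc i = d" by simp
      with c_s' have "qscale c s' = qscale (c ^ d) s" by simp
      also have "\<dots> = (\<Sum>j<d. qscale (of_int (m j)) (qscale (c ^ j) s))"
        unfolding power_d by (intro quat_eqI) (simp_all add: sum_distrib_right mult.assoc)
      also have "\<dots> \<in> int_span S'"
        using span \<open>s \<in> S\<close> by (intro int_span_sum int_span_of_int_scale) simp
      finally show ?thesis .
    qed
  qed
  moreover have "\<forall>s\<in>S'. qscale y s \<in> int_span S'" if y: "\<forall>s\<in>S. qscale y s \<in> int_span S" for y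
  proof
    fix s' assume "s' \<in> S'"
    then obtain i s where "i < d" "s \<in> S" "s' = qscale (c ^ i) s"
      unfolding S'_def by auto
    then have "qscale y s' = qscale (c ^ i) (qscale y s)"
      by (simp add: qscale_qscale mult.commute)
    also have "\<dots> \<in> int_span S'"
      using y \<open>s \<in> S\<close> span[OF \<open>i < d\<close>] by (blast intro: int_span_qscale)
    finally show "qscale y s' \<in> int_span S'" .
  qed
  moreover have "\<forall>s'\<in>S'. \<exists>i. \<exists>s\<in>S. s' = qscale (c ^ i) s"
    unfolding S'_def by auto
  ultimately show ?thesis
    using that \<open>finite S'\<close> \<open>S \<subseteq> S'\<close> by blast
qed

inductive_set tspan :: "'k::field set \<Rightarrow> 'k quat set \<Rightarrow> 'k quat set" for T S where
  zero: "0 \<in> tspan T S"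
| base: "s \<in> S \<Longrightarrow> s \<in> tspan T S"
| add: "x \<in> tspan T S \<Longrightarrow> y \<in> tspan T S \<Longrightarrow> x + y \<in> tspan T S"
| scale: "t \<in> T \<Longrightarrow> x \<in> tspan T S \<Longrightarrow> qscale t x \<in> tspan T S"

lemma tspan_sum: "(\<And>i. i \<in> A \<Longrightarrow> f i \<in> tspan T S) \<Longrightarrow> sum f A \<in> tspan T S"
  by (induction A rule: infinite_finite_induct) (simp_all add: tspan.zero tspan.add)

lemma tspan_power_scale:
  assumes "t \<in> T" "x \<in> tspan T S"
  shows "qscale (t ^ i) x \<in> tspan T S"
proof (induction i)
  case 0
  then show ?case using assms(2) by (simp add: qscale_one)
next
  case (Suc i)
  then show ?case using tspan.scale[OF assms(1) Suc] by (simp add: qscale_qscale)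
qed

lemma tspan_qscale:
  assumes "\<And>s. s \<in> S \<Longrightarrow> qscale c s \<in> tspan T S" "x \<in> tspan T S"
  shows "qscale c x \<in> tspan T S"
  using assms(2)
proof induction
  case zero
  then show ?case by (simp add: qscale_zero_right tspan.zero)
next
  case (base s)
  then show ?case by (rule assms(1))
next
  case (add x y)
  then show ?case by (simp add: qscale_add_right tspan.add)
next
  case (scale t x)
  then show ?case
    using tspan.scale[OF scale.hyps(1) scale.IH] by (simp add: qscale_qscale mult.commute)
qed

lemma tspan_int_span_stable_subset:
  fixes T :: "'k::field_char_0 set"
  assumes "finite T'" "T' \<subseteq> T" "\<forall>t\<in>T. algebraic_int t" "finite S0"
  shows "\<exists>S. finite S \<and> S0 \<subseteq> S \<and> S \<subseteq> tspan T S0 \<and> (\<forall>t\<in>T'. \<forall>s\<in>S. qscale t s \<in> int_span S)"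
  using assms(1,2)
proof (induction T' rule: finite_induct)
  case empty
  then show ?case using assms(4) by (auto intro: tspan.base)
next
  case (insert c T')
  then obtain S where S: "finite S" "S0 \<subseteq> S" "S \<subseteq> tspan T S0"
    "\<forall>t\<in>T'. \<forall>s\<in>S. qscale t s \<in> int_span S"
    by auto
  have "c \<in> T" "algebraic_int c" using insert.prems assms(3) by auto
  obtain S' where "finite S'" "S \<subseteq> S'" and S'_powers: "\<forall>s'\<in>S'. \<exists>i. \<exists>s\<in>S. s' = qscale (c ^ i) s"
    and c_closed: "\<forall>s\<in>S'. qscale c s \<in> int_span S'"
    and closed: "\<forall>y. (\<forall>s\<in>S. qscale y s \<in> int_span S) \<longrightarrow> (\<forall>s\<in>S'. qscale y s \<in> int_span S')"
    by (rule int_span_adjoin_algebraic_int[OF S(1) \<open>algebraic_int c\<close>])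
  have "S' \<subseteq> tspan T S0"
  proof
    fix s' assume "s' \<in> S'"
    then obtain i s where "s \<in> S" "s' = qscale (c ^ i) s"
      using S'_powers by blast
    then show "s' \<in> tspan T S0"
      using tspan_power_scale[OF \<open>c \<in> T\<close>] S(3) by blast
  qed
  moreover have "\<forall>s\<in>S'. qscale t s \<in> int_span S'" if "t \<in> insert c T'" for t
  proof (cases "t = c")
    case False
    with that have "t \<in> T'" by simp
    then show ?thesis using closed S(4) by simp
  qed (use c_closed in simp)
  ultimately show ?case
    using \<open>finite S'\<close> \<open>S \<subseteq> S'\<close> S(2) by (intro exI[of _ S']) auto
qed

lemma tspan_subset_int_span:
  assumes "finite S" "S0 \<subseteq> S" and closed: "\<forall>t\<in>T. \<forall>s\<in>S. qscale t s \<in> int_span S"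
  shows "tspan T S0 \<subseteq> int_span S"
proof
  fix x assume "x \<in> tspan T S0"
  then show "x \<in> int_span S"
  proof induction
    case zero
    then show ?case by (rule int_span_zero)
  next
    case (base s)
    then show ?case using assms(1,2) by (blast intro: int_span_base)
  next
    case (add x y)
    then show ?case by (blast intro: int_span_add)
  next
    case (scale t x)
    show ?case
    proof (rule int_span_qscale[OF scale.IH])
      show "qscale t s \<in> int_span S" if "s \<in> S" for s
        using closed scale.hyps(1) that by blast
    qed
  qed
qed

lemma tspan_finitely_generated:
  fixes T :: "'k::field_char_0 set"
  assumes "finite T" "\<forall>t\<in>T. algebraic_int t" "finite S0"
  obtains S where "finite S" "S \<subseteq> tspan T S0" "tspan T S0 \<subseteq> int_span S"
proof -
  obtain S where "finite S" "S0 \<subseteq> S" "S \<subseteq> tspan T S0"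
    and "\<forall>t\<in>T. \<forall>s\<in>S. qscale t s \<in> int_span S"
    using tspan_int_span_stable_subset[OF assms(1) order_refl assms(2,3)] by blast
  then show ?thesis
    using that tspan_subset_int_span by blast
qed

lemma algebraic_int_if_tspan_stable:
  fixes x :: "'k::field_char_0"
  assumes "finite T" "\<forall>t\<in>T. algebraic_int t" "finite S0"
    and "z \<in> tspan T S0" "z \<noteq> 0"
    and stable: "\<And>s. s \<in> S0 \<Longrightarrow> qscale x s \<in> tspan T S0"
  shows "algebraic_int x"
proof -
  obtain S where S: "finite S" "S \<subseteq> tspan T S0" "tspan T S0 \<subseteq> int_span S"
    using assms(1-3) by (rule tspan_finitely_generated)
  show ?thesis
  proof (rule algebraic_int_if_int_span_stable[OF S(1)])
    show "z \<in> int_span S" using assms(4) S(3) by blast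
    show "z \<noteq> 0" by fact
    fix s assume "s \<in> S"
    then have "qscale x s \<in> tspan T S0"
      using S(2) by (blast intro: tspan_qscale[OF stable])
    then show "qscale x s \<in> int_span S"
      using S(3) by blast
  qed
qed

section \<open>Norms of elements of an order are algebraic integers\<close>

lemma tspan_qmul_qconj:
  assumes "\<And>g. g \<in> G \<Longrightarrow> \<alpha> g \<in> T" "\<And>g. g \<in> G \<Longrightarrow> \<beta> g \<in> T"
  shows "qmul a b (qconj (\<Sum>g\<in>G. qscale (\<alpha> g) g)) (\<Sum>h\<in>G. qscale (\<beta> h) h)
    \<in> tspan T ((\<lambda>(g, h). qmul a b (qconj g) h) ` (G \<times> G))"
  unfolding qmul_qconj_sum_sum by (intro tspan_sum tspan.scale tspan.base assms) auto

lemma is_order_qone: "is_order a b \<O> \<Longrightarrow> qone \<in> \<O>"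
  unfolding is_order_def by blast

lemma is_order_add: "is_order a b \<O> \<Longrightarrow> x \<in> \<O> \<Longrightarrow> y \<in> \<O> \<Longrightarrow> x + y \<in> \<O>"
  unfolding is_order_def plus_quat_def by blast

lemma is_order_qmul: "is_order a b \<O> \<Longrightarrow> x \<in> \<O> \<Longrightarrow> y \<in> \<O> \<Longrightarrow> qmul a b x y \<in> \<O>"
  unfolding is_order_def by blast

lemma is_order_coordinates:
  assumes "is_order a b \<O>"
  obtains G where "finite G" "G \<subseteq> \<O>"
    "\<And>x. x \<in> \<O> \<Longrightarrow> \<exists>c. (\<forall>g\<in>G. algebraic_int (c g)) \<and> x = (\<Sum>g\<in>G. qscale (c g) g)"
proof -
  obtain G where "finite G" "G \<subseteq> \<O>"
    and \<O>: "\<O> = {qsum (\<lambda>g. qscale (c g) g) G | c. \<forall>g\<in>G. c g \<in> ring_of_integers}"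
    using assms unfolding is_order_def by blast
  show ?thesis
  proof (rule that[OF \<open>finite G\<close> \<open>G \<subseteq> \<O>\<close>])
    fix x assume "x \<in> \<O>"
    then show "\<exists>c. (\<forall>g\<in>G. algebraic_int (c g)) \<and> x = (\<Sum>g\<in>G. qscale (c g) g)"
      using \<O> qsum_eq_sum[OF \<open>finite G\<close>] unfolding ring_of_integers_def by auto
  qed
qed

lemma algebraic_int_qnrm_order:
  fixes a b :: "'k::field_char_0"
  assumes "is_order a b \<O>" "w \<in> \<O>"
  shows "algebraic_int (qnrm a b w)"
proof -
  obtain G where "finite G" "G \<subseteq> \<O>" and coords:
    "\<And>x. x \<in> \<O> \<Longrightarrow> \<exists>c. (\<forall>g\<in>G. algebraic_int (c g)) \<and> x = (\<Sum>g\<in>G. qscale (c g) g)"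
    using assms(1) by (rule is_order_coordinates) blast
  have coeffs: "\<forall>g\<in>G. \<exists>c. (\<forall>h\<in>G. algebraic_int (c h)) \<and> qmul a b w g = (\<Sum>h\<in>G. qscale (c h) h)"
    using coords is_order_qmul[OF assms] \<open>G \<subseteq> \<O>\<close> by blast
  from bchoice[OF coeffs] obtain C where C: "\<forall>g\<in>G. (\<forall>h\<in>G. algebraic_int (C g h))
      \<and> qmul a b w g = (\<Sum>h\<in>G. qscale (C g h) h)"
    by (elim exE) iprover
  obtain e where e_int: "\<forall>g\<in>G. algebraic_int (e g)"
    and e: "qone = (\<Sum>g\<in>G. qscale (e g) g)"
    using coords[OF is_order_qone[OF assms(1)]] by blast
  define T where "T = (\<lambda>(g, h). C g h) ` (G \<times> G) \<union> e ` G"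
  define S0 where "S0 = (\<lambda>(g, h). qmul a b (qconj g) h) ` (G \<times> G)"
  show ?thesis
  proof (rule algebraic_int_if_tspan_stable)
    show "finite T" "finite S0"
      unfolding T_def S0_def using \<open>finite G\<close> by simp_all
    show "\<forall>t\<in>T. algebraic_int t"
      unfolding T_def using C e_int by auto
    have "qone = qmul a b (qconj (\<Sum>g\<in>G. qscale (e g) g)) (\<Sum>h\<in>G. qscale (e h) h)"
      by (simp add: e[symmetric] qone_def)
    also have "\<dots> \<in> tspan T S0"
      unfolding S0_def by (rule tspan_qmul_qconj) (simp_all add: T_def)
    finally show "qone \<in> tspan T S0" .
    show "qone \<noteq> 0"
      by (simp add: qone_def zero_quat_def qzero_def)
    fix s assume "s \<in> S0"
    then obtain g h where "g \<in> G" "h \<in> G" and s: "s = qmul a b (qconj g) h"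
      unfolding S0_def by auto
    have "qscale (qnrm a b w) s = qmul a b (qconj (qmul a b w g)) (qmul a b w h)"
      unfolding s by (rule qmul_qconj_qmul_qmul[symmetric])
    also have "\<dots> = qmul a b (qconj (\<Sum>g'\<in>G. qscale (C g g') g')) (\<Sum>h'\<in>G. qscale (C h h') h')"
      using C \<open>g \<in> G\<close> \<open>h \<in> G\<close> by simp
    also have "\<dots> \<in> tspan T S0"
      unfolding S0_def by (rule tspan_qmul_qconj) (auto simp: T_def \<open>g \<in> G\<close> \<open>h \<in> G\<close>)
    finally show "qscale (qnrm a b w) s \<in> tspan T S0" .
  qed
qed

section \<open>Ideal products and the norm form on I\<O>\<close>

lemma ideal_prod_zero: "0 \<in> ideal_prod I J"
  unfolding ideal_prod_def by force

lemma ideal_prod_add_mult: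
  assumes "x \<in> ideal_prod I J" "t0 \<in> I" "s0 \<in> J"
  shows "x + t0 * s0 \<in> ideal_prod I J"
proof -
  obtain n :: nat and t s where x: "x = (\<Sum>i<n. t i * s i)" and ts: "\<forall>i<n. t i \<in> I \<and> s i \<in> J"
    using assms(1) unfolding ideal_prod_def by blast
  have "x + t0 * s0 = (\<Sum>i<Suc n. (t(n := t0)) i * (s(n := s0)) i)"
    unfolding x by simp
  moreover have "\<forall>i<Suc n. (t(n := t0)) i \<in> I \<and> (s(n := s0)) i \<in> J"
    using ts assms(2,3) by (simp add: less_Suc_eq)
  ultimately show ?thesis
    unfolding ideal_prod_def by blast
qed

lemma ideal_prod_add:
  assumes "x \<in> ideal_prod I J" "y \<in> ideal_prod I J"
  shows "x + y \<in> ideal_prod I J"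
proof -
  obtain n :: nat and t s where y: "y = (\<Sum>i<n. t i * s i)" and ts: "\<forall>i<n. t i \<in> I \<and> s i \<in> J"
    using assms(2) unfolding ideal_prod_def by blast
  have "x + (\<Sum>i<k. t i * s i) \<in> ideal_prod I J" if "k \<le> n" for k
    using that
  proof (induction k)
    case 0
    then show ?case using assms(1) by simp
  next
    case (Suc k)
    then have "x + (\<Sum>i<k. t i * s i) + t k * s k \<in> ideal_prod I J"
      using ts by (intro ideal_prod_add_mult) auto
    then show ?case by (simp add: add.assoc)
  qed
  then show ?thesis unfolding y by blast
qed

lemma ideal_prod_sum: "(\<And>i. i \<in> A \<Longrightarrow> f i \<in> ideal_prod I J) \<Longrightarrow> sum f A \<in> ideal_prod I J"
  by (induction A rule: infinite_finite_induct) (simp_all add: ideal_prod_zero ideal_prod_add)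

lemma ideal_prod_mult: "t \<in> I \<Longrightarrow> s \<in> J \<Longrightarrow> t * s \<in> ideal_prod I J"
  using ideal_prod_add_mult[OF ideal_prod_zero] by fastforce

lemma ideal_prod_uminus:
  assumes "x \<in> ideal_prod I J" "\<And>t. t \<in> I \<Longrightarrow> - t \<in> I"
  shows "- x \<in> ideal_prod I J"
proof -
  obtain n :: nat and t s where x: "x = (\<Sum>i<n. t i * s i)" and ts: "\<forall>i<n. t i \<in> I \<and> s i \<in> J"
    using assms(1) unfolding ideal_prod_def by blast
  show ?thesis
    unfolding ideal_prod_def mem_Collect_eq
  proof (intro exI conjI)
    show "- x = (\<Sum>i<n. (- t i) * s i)"
      unfolding x by (simp add: sum_negf)
    show "\<forall>i<n. - t i \<in> I \<and> s i \<in> J"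
      using ts assms(2) by blast
  qed
qed

lemma ok_ideal_mult: "ok_ideal I \<Longrightarrow> algebraic_int r \<Longrightarrow> t \<in> I \<Longrightarrow> r * t \<in> I"
  unfolding ok_ideal_def ring_of_integers_def by blast

lemma ok_ideal_uminus: "ok_ideal I \<Longrightarrow> t \<in> I \<Longrightarrow> - t \<in> I"
  using ok_ideal_mult[of I "-1" t] by (simp add: int_imp_algebraic_int)

lemma ok_ideal_diff: "ok_ideal I \<Longrightarrow> s \<in> I \<Longrightarrow> t \<in> I \<Longrightarrow> s - t \<in> I"
  using ok_ideal_uminus[of I t] unfolding ok_ideal_def by (metis diff_conv_add_uminus)

definition qpolar :: "'k::field \<Rightarrow> 'k \<Rightarrow> 'k quat \<Rightarrow> 'k quat \<Rightarrow> 'k" where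
  "qpolar a b x y = qnrm a b (x + y) - qnrm a b x - qnrm a b y"

lemma qpolar_components:
  "qpolar a b x y = 2 * (q0 x * q0 y - a * q1 x * q1 y - b * q2 x * q2 y + a * b * q3 x * q3 y)"
  unfolding qpolar_def qnrm_components by (simp add: power2_eq_square algebra_simps)

lemma qpolar_sum_left: "qpolar a b (sum f A) y = (\<Sum>i\<in>A. qpolar a b (f i) y)"
  by (induction A rule: infinite_finite_induct) (simp_all add: qpolar_components algebra_simps)

lemma qpolar_qscale: "qpolar a b (qscale s x) (qscale t y) = s * t * qpolar a b x y"
  unfolding qpolar_components by (simp add: algebra_simps)

lemma qnrm_qscale: "qnrm a b (qscale t x) = t ^ 2 * qnrm a b x"
  unfolding qnrm_components by (simp add: power2_eq_square algebra_simps)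

lemma qnrm_sum:
  fixes x :: "nat \<Rightarrow> 'k::field quat"
  shows "qnrm a b (\<Sum>j<n. x j) = (\<Sum>j<n. qnrm a b (x j) + (\<Sum>i<j. qpolar a b (x i) (x j)))"
proof (induction n)
  case 0
  then show ?case by (simp add: qnrm_components)
next
  case (Suc n)
  have "qnrm a b (\<Sum>j<Suc n. x j)
      = qnrm a b (\<Sum>j<n. x j) + qnrm a b (x n) + qpolar a b (\<Sum>j<n. x j) (x n)"
    by (simp add: qpolar_def)
  then show ?case
    using Suc.IH by (simp add: qpolar_sum_left)
qed

lemma qnrm_minus_qone: "qnrm a b (x - qone) = qnrm a b x - qtr x + 1"
  by (cases x) (simp add: minus_quat_def qone_def power2_eq_square algebra_simps)

lemma qnrm_ideal_times_order:
  assumes \<O>: "is_order a b \<O>" and I: "ok_ideal I" and "z \<in> ideal_times_order I \<O>"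
  shows "qnrm a b z \<in> ideal_prod I I"
proof -
  obtain n :: nat and t w where z: "z = (\<Sum>j<n. qscale (t j) (w j))" and tw: "\<forall>j<n. t j \<in> I \<and> w j \<in> \<O>"
    using assms(3) unfolding ideal_times_order_def qsum_eq_sum[OF finite_lessThan] by blast
  have qnrm_t: "qnrm a b u * t j \<in> I" if "u \<in> \<O>" "j < n" for u j
    using ok_ideal_mult[OF I algebraic_int_qnrm_order[OF \<O> that(1)]] tw that(2) by blast
  have "qnrm a b (qscale (t j) (w j)) \<in> ideal_prod I I" if "j < n" for j
  proof -
    have "qnrm a b (qscale (t j) (w j)) = t j * (qnrm a b (w j) * t j)"
      by (simp add: qnrm_qscale power2_eq_square algebra_simps)
    then show ?thesis
      using tw that qnrm_t by (simp add: ideal_prod_mult)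
  qed
  moreover have "qpolar a b (qscale (t i) (w i)) (qscale (t j) (w j)) \<in> ideal_prod I I"
    if "i < n" "j < n" for i j
  proof -
    have "qpolar a b (w i) (w j) * t j \<in> I"
      unfolding qpolar_def left_diff_distrib
      using tw that by (intro ok_ideal_diff[OF I] qnrm_t is_order_add[OF \<O>]) auto
    moreover have "qpolar a b (qscale (t i) (w i)) (qscale (t j) (w j))
        = t i * (qpolar a b (w i) (w j) * t j)"
      by (simp add: qpolar_qscale algebra_simps)
    ultimately show ?thesis
      using tw that by (simp add: ideal_prod_mult)
  qed
  ultimately show ?thesis
    unfolding z qnrm_sum by (intro ideal_prod_sum ideal_prod_add) auto
qed

theorem lemma7p2:
  fixes a b :: "'k::field_char_0" and \<O> :: "'k quat set" and I :: "'k set"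
    and \<gamma> :: "'k quat"
  assumes "number_field TYPE('k)"
    and "a \<noteq> 0" and "b \<noteq> 0"
    and "is_order a b \<O>"
    and "ok_ideal I"
    and "\<gamma> \<in> order_norm_one_level a b \<O> I"
  shows "qtr \<gamma> - 2 \<in> ideal_prod I I"
proof -
  have "qnrm a b \<gamma> = 1" and "\<gamma> - qone \<in> ideal_times_order I \<O>"
    using assms(6) unfolding order_norm_one_level_def minus_quat_def by auto
  have "qtr \<gamma> - 2 = - qnrm a b (\<gamma> - qone)"
    using \<open>qnrm a b \<gamma> = 1\<close> by (simp add: qnrm_minus_qone)
  also have "\<dots> \<in> ideal_prod I I"
    using qnrm_ideal_times_order[OF assms(4,5) \<open>\<gamma> - qone \<in> _\<close>] ok_ideal_uminus[OF assms(5)]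
    by (rule ideal_prod_uminus)
  finally show ?thesis .
qed

end
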